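(* Let $\boldsymbol{X}\in\mathcal{S}^{n\times n}$ have pairwise distinct eigenvalues, let $\delta'>0$, and let $\boldsymbol{X}=\boldsymbol{Q}_x\operatorname{Diag}(\boldsymbol{\lambda}(\boldsymbol{X}))\boldsymbol{Q}_x^\top$ with $\boldsymbol{Q}_x\in\mathcal{O}(n,n)$ be a spectral decomposition. Then there exists $\delta''>0$ such that $$\boldsymbol{B}(\boldsymbol{X},\delta'')\subset\boldsymbol{B}\big((\boldsymbol{Q}_x,\boldsymbol{\lambda}(\boldsymbol{X})),\delta'\big).$$
   Context: $\mathcal{S}^{n\times n}$ denotes the real symmetric $n\times n$ matrices, $\mathcal{O}(n,n)$ the real orthogonal $n\times n$ matrices, and $\boldsymbol{\lambda}(\boldsymbol{X})$ the vector of eigenvalues of $\boldsymbol{X}$ in nonincreasing order. Let $\mathbb{R}^n_{\geq}=\{\boldsymbol{x}\in\mathbb{R}^n: x_1\ge\cdots\ge x_n\}$. For $\boldsymbol{Q}\in\mathcal{O}(n,n)$, $\boldsymbol{\lambda}\in\mathbb{R}^n_\geq$ and $\delta>0$, $\boldsymbol{B}((\boldsymbol{Q},\boldsymbol{\lambda}),\delta):=\{\bar{\boldsymbol{Q}}\operatorname{Diag}(\bar{\boldsymbol{\lambda}})\bar{\boldsymbol{Q}}^\top : \|\bar{\boldsymbol{Q}}-\boldsymbol{Q}\|_F\le\delta,\ \|\bar{\boldsymbol{\lambda}}-\boldsymbol{\lambda}\|\le\delta,\ \bar{\boldsymbol{Q}}\in\mathcal{O}(n,n),\ \bar{\boldsymbol{\lambda}}\in\mathbb{R}^n_\geq\}$,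 and $\boldsymbol{B}(\boldsymbol{X},\delta):=\{\bar{\boldsymbol{X}}\in\mathcal{S}^{n\times n}:\|\bar{\boldsymbol{X}}-\boldsymbol{X}\|_F\le\delta\}$. *)

theory Defs
  imports "HOL-Analysis.Analysis"
begin

text \<open>Index type 'n is a finite linearly ordered type standing for {1..n}.
  Matrices are real^'n^'n, vectors real^'n.\<close>

definition frob_norm :: "real^'n^'n \<Rightarrow> real" where
  "frob_norm A = sqrt (\<Sum>i\<in>UNIV. \<Sum>j\<in>UNIV. (A$i$j)^2)"

definition Diag :: "real^'n \<Rightarrow> real^'n^'n" where
  "Diag v = (\<chi> i j. if i = j then v$i else 0)"

definition nonincr :: "real^'n::{finite,linorder} \<Rightarrow> bool" where
  "nonincr v \<longleftrightarrow> (\<forall>i j. i \<le> j \<longrightarrow> v$j \<le> v$i)"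

definition sym_mat :: "real^'n^'n \<Rightarrow> bool" where
  "sym_mat X \<longleftrightarrow> transpose X = X"

definition eigvals :: "real^('n::{finite,linorder})^('n::{finite,linorder}) \<Rightarrow> real^('n::{finite,linorder})" where
  "eigvals X = (THE l. nonincr l \<and>
      (\<forall>t::real. det (t *\<^sub>R mat 1 - X) = (\<Prod>i\<in>UNIV. t - l$i)))"

definition spec_ball :: "real^('n::{finite,linorder})^('n::{finite,linorder}) \<Rightarrow> real^('n::{finite,linorder}) \<Rightarrow> real \<Rightarrow> (real^('n::{finite,linorder})^('n::{finite,linorder})) set" where
  "spec_ball Q l d = {Qb ** Diag lb ** transpose Qb | Qb lb.
      frob_norm (Qb - Q) \<le> d \<and> norm (lb - l) \<le> d \<and> orthogonal_matrix Qb \<and> nonincr lb}"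

definition sym_ball :: "real^'n^'n \<Rightarrow> real \<Rightarrow> (real^'n^'n) set" where
  "sym_ball X d = {Xb. sym_mat Xb \<and> frob_norm (Xb - X) \<le> d}"

end

theory Submission
  imports Defs "HOL-Computational_Algebra.Polynomial"
begin

(* Let X = Q Diag(l) Q^T with l_1 > ... > l_n and choose a radius eps well below the gaps.
   The characteristic polynomial of X changes sign on every window [l_i - eps, l_i + eps];
   by continuity of det this persists for Y near X, so by the intermediate value theorem a
   symmetric Y has an eigenvalue m_i in each window. These are distinct, hence unit
   eigenvectors u_i of Y are orthonormal and Y = P Diag(m) P^T with P = (u_1 ... u_n) and m
   nonincreasing. Orienting u_i towards the i-th column q_i of Q and expanding it in the
   eigenbasis of X gives |u_i - q_i|^2 <= 2 |(Y - X) u_i|^2 / eps^2, so P -> Q and m -> l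
   as Y -> X. That l is the vector eigvals X follows because a nonincreasing vector is
   determined by the multiplicities of its entries, i.e. by its characteristic polynomial. *)

lemma power2_norm_vec: "(norm x)\<^sup>2 = (\<Sum>i\<in>UNIV. (norm (x $ i))\<^sup>2)"
  by (simp add: norm_vec_def L2_set_def sum_nonneg)

lemma frob_norm_eq_norm: "frob_norm A = norm A"
  by (simp add: frob_norm_def norm_vec_def L2_set_def sum_nonneg)

lemma power2_norm_matrix_columns:
  fixes A :: "real^'n^'m"
  shows "(norm A)\<^sup>2 = (\<Sum>j\<in>UNIV. (norm (column j A))\<^sup>2)"
  by (simp add: power2_norm_vec column_def sum.swap[of _ "UNIV::'m set"])

lemma norm_matrix_vector_mult_le:
  fixes A :: "real^'n^'m"
  shows "norm (A *v x) \<le> norm A * norm x"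
proof -
  have "(norm (A *v x))\<^sup>2 = (\<Sum>i\<in>UNIV. (A $ i \<bullet> x)\<^sup>2)"
    by (simp add: power2_norm_vec matrix_mult_dot)
  also have "\<dots> \<le> (\<Sum>i\<in>UNIV. (norm (A $ i) * norm x)\<^sup>2)"
    by (intro sum_mono power2_mono) (simp add: Cauchy_Schwarz_ineq2)
  also have "\<dots> = (\<Sum>i\<in>UNIV. (norm (A $ i))\<^sup>2) * (norm x)\<^sup>2"
    by (simp add: power_mult_distrib sum_distrib_right)
  also have "\<dots> = (norm A * norm x)\<^sup>2"
    by (simp only: power2_norm_vec[of A, symmetric] power_mult_distrib)
  finally show ?thesis
    by (rule power2_le_imp_le) simp
qed

lemma norm_orthogonal_matrix_vector_mult:
  fixes Q :: "real^'n^'n"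
  assumes "orthogonal_matrix Q"
  shows "norm (Q *v x) = norm x"
  using assms orthogonal_transformation_matrix[of "(*v) Q"] orthogonal_transformation_norm by simp

lemma matrix_diff_ldistrib: "A ** (B - C) = A ** B - A ** (C :: 'a::ring_1^'p^'n)"
  by (simp add: matrix_matrix_mult_def vec_eq_iff sum_subtractf algebra_simps)

lemma matrix_diff_rdistrib: "(B - C) ** A = B ** A - C ** (A :: 'a::ring_1^'p^'n)"
  by (simp add: matrix_matrix_mult_def vec_eq_iff sum_subtractf algebra_simps)

lemma matrix_scaleR_left: "(c *\<^sub>R A) ** B = c *\<^sub>R (A ** (B :: real^'p^'n))"
  by (simp add: matrix_matrix_mult_def vec_eq_iff sum_distrib_left algebra_simps)

lemma matrix_scaleR_right: "A ** (c *\<^sub>R B) = c *\<^sub>R (A ** (B :: real^'p^'n))"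
  by (simp add: matrix_matrix_mult_def vec_eq_iff sum_distrib_left algebra_simps)

lemma Diag_mult_vector: "Diag l *v x = (\<chi> i. l $ i * x $ i)"
  by (simp add: Diag_def matrix_vector_mult_def vec_eq_iff if_distrib if_distribR cong: if_cong)

lemma charpoly_orthogonal_similar_Diag:
  fixes Q :: "real^'n^'n"
  assumes "orthogonal_matrix Q"
  shows "det (t *\<^sub>R mat 1 - Q ** Diag l ** transpose Q) = (\<Prod>i\<in>UNIV. t - l $ i)"
proof -
  have "t *\<^sub>R mat 1 - Q ** Diag l ** transpose Q = Q ** (t *\<^sub>R mat 1 - Diag l) ** transpose Q"
    using assms by (simp add: orthogonal_matrix_def matrix_diff_ldistrib matrix_diff_rdistrib
        matrix_scaleR_left matrix_scaleR_right)
  then have "det (t *\<^sub>R mat 1 - Q ** Diag l ** transpose Q) = det (t *\<^sub>R mat 1 - Diag l)"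
    using det_orthogonal_matrix[OF assms] by (auto simp: det_mul)
  also have "\<dots> = (\<Prod>i\<in>UNIV. t - l $ i)"
    by (subst det_diagonal) (auto simp: Diag_def mat_def)
  finally show ?thesis .
qed

lemma continuous_on_det [continuous_intros]:
  fixes f :: "'a::topological_space \<Rightarrow> real^'n^'n"
  assumes "continuous_on S f"
  shows "continuous_on S (\<lambda>x. det (f x))"
  unfolding det_def using assms by (intro continuous_intros)

lemma unit_eigenvector_exists:
  fixes Y :: "real^'n^'n"
  assumes "det (\<mu> *\<^sub>R mat 1 - Y) = 0"
  obtains u where "norm u = 1" "Y *v u = \<mu> *\<^sub>R u" "0 \<le> q \<bullet> u"
proof -
  obtain v where "v \<noteq> 0" and "(\<mu> *\<^sub>R mat 1 - Y) *v v = 0"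
    using assms invertible_det_nz[of "\<mu> *\<^sub>R mat 1 - Y"] invertible_left_inverse[of "\<mu> *\<^sub>R mat 1 - Y"]
      matrix_left_invertible_ker[of "\<mu> *\<^sub>R mat 1 - Y"]
    by blast
  then have v: "v \<noteq> 0" "Y *v v = \<mu> *\<^sub>R v"
    by (simp_all add: matrix_vector_mult_diff_rdistrib scaleR_matrix_vector_assoc[symmetric])
  define s where "s = (if 0 \<le> q \<bullet> v then 1 else -1) / norm v"
  show thesis
  proof
    show "norm (s *\<^sub>R v) = 1" "Y *v (s *\<^sub>R v) = \<mu> *\<^sub>R (s *\<^sub>R v)" "0 \<le> q \<bullet> (s *\<^sub>R v)"
      using v by (simp_all add: s_def matrix_vector_mult_scaleR)
  qed
qed

lemma sym_mat_inner_commute: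
  assumes "sym_mat Y"
  shows "(Y *v x) \<bullet> y = x \<bullet> (Y *v y)"
  using assms transpose_matrix_vector[of Y x] by (simp add: sym_mat_def dot_lmul_matrix)

lemma sym_mat_eigenvectors_orthogonal:
  assumes "sym_mat Y" "Y *v u = a *\<^sub>R u" "Y *v v = b *\<^sub>R v" "a \<noteq> b"
  shows "orthogonal u v"
proof -
  have "a * (u \<bullet> v) = b * (u \<bullet> v)"
    using sym_mat_inner_commute[OF assms(1), of u v] assms(2,3) by simp
  then show ?thesis
    using assms(4) by (simp add: orthogonal_def)
qed

lemma orthonormal_eigenvectors_diagonalize:
  fixes Y :: "real^'n^'n" and U :: "'n \<Rightarrow> real^'n"
  assumes "sym_mat Y" "\<And>j. norm (U j) = 1" "\<And>j. Y *v U j = m $ j *\<^sub>R U j"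
    and "\<And>i j. i \<noteq> j \<Longrightarrow> m $ i \<noteq> m $ j"
  defines "P \<equiv> \<chi> i j. U j $ i"
  shows "orthogonal_matrix P" "Y = P ** Diag m ** transpose P"
proof -
  have column_P: "column j P = U j" for j
    by (simp add: P_def column_def)
  show orth: "orthogonal_matrix P"
    unfolding orthogonal_matrix_orthonormal_columns column_P
    using assms(1-4) sym_mat_eigenvectors_orthogonal by metis
  have "(Y ** P) $ i $ j = (P ** Diag m) $ i $ j" for i j
  proof -
    have "(Y ** P) $ i $ j = (Y *v U j) $ i"
      by (simp add: P_def matrix_matrix_mult_def matrix_vector_mult_def)
    also have "\<dots> = (P ** Diag m) $ i $ j"
      by (simp add: assms(3) P_def Diag_def matrix_matrix_mult_def if_distrib if_distribR cong: if_cong)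
    finally show ?thesis .
  qed
  then have "Y ** P = P ** Diag m"
    by (simp add: vec_eq_iff)
  then have "Y ** (P ** transpose P) = P ** Diag m ** transpose P"
    by (simp add: matrix_mul_assoc)
  then show "Y = P ** Diag m ** transpose P"
    using orth by (simp add: orthogonal_matrix_def)
qed

lemma power2_norm_residual_eigenbasis:
  fixes Q X Y :: "real^'n^'n"
  assumes Q: "orthogonal_matrix Q" and X: "X = Q ** Diag l ** transpose Q"
    and u: "Y *v u = \<mu> *\<^sub>R u"
  shows "(norm ((Y - X) *v u))\<^sup>2 = (\<Sum>j\<in>UNIV. ((\<mu> - l $ j) * (transpose Q *v u) $ j)\<^sup>2)"
proof -
  define w where "w = transpose Q *v u"
  have "transpose Q ** X = Diag l ** transpose Q"
    using Q by (simp add: X orthogonal_matrix_def matrix_mul_assoc)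
  then have "transpose Q *v ((Y - X) *v u) = \<mu> *\<^sub>R w - Diag l *v w"
    using u by (simp only: w_def matrix_vector_mult_diff_rdistrib matrix_vector_mult_diff_distrib
        matrix_vector_mult_scaleR matrix_vector_mul_assoc)
  then have "norm ((Y - X) *v u) = norm (\<mu> *\<^sub>R w - Diag l *v w)"
    using norm_orthogonal_matrix_vector_mult[of "transpose Q" "(Y - X) *v u"] Q by simp
  then show ?thesis
    by (simp add: w_def power2_norm_vec Diag_mult_vector algebra_simps)
qed

lemma eigenvector_column_distance:
  fixes Q X Y :: "real^'n^'n"
  assumes Q: "orthogonal_matrix Q" and X: "X = Q ** Diag l ** transpose Q"
    and u: "norm u = 1" "Y *v u = \<mu> *\<^sub>R u" and sign: "0 \<le> column i Q \<bullet> u"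
    and "0 < \<epsilon>" and gap: "\<And>j. j \<noteq> i \<Longrightarrow> \<epsilon> \<le> \<bar>\<mu> - l $ j\<bar>"
  shows "(norm (u - column i Q))\<^sup>2 \<le> 2 * (norm ((Y - X) *v u))\<^sup>2 / \<epsilon>\<^sup>2"
proof -
  \<comment> \<open>Coordinates of u in the eigenbasis of X; as \<mu> is \<epsilon>-far from every l $ j with j \<noteq> i,
    the residual bounds the weight of u off the i-th coordinate.\<close>
  define w where "w = transpose Q *v u"
  have w_nth: "w $ j = column j Q \<bullet> u" for j
    by (simp add: w_def vector_matrix_mult_def inner_vec_def column_def mult.commute)
  have "norm w = 1"
    using norm_orthogonal_matrix_vector_mult[of "transpose Q" u] Q u by (simp add: w_def)
  then have w_sum: "(\<Sum>j\<in>UNIV. (w $ j)\<^sup>2) = 1"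
    using power2_norm_vec[of w] by simp
  have "\<epsilon>\<^sup>2 * (1 - (w $ i)\<^sup>2) = (\<Sum>j\<in>UNIV - {i}. \<epsilon>\<^sup>2 * (w $ j)\<^sup>2)"
    using w_sum sum.remove[of UNIV i "\<lambda>j. (w $ j)\<^sup>2"] by (simp add: sum_distrib_left[symmetric])
  also have "\<dots> \<le> (\<Sum>j\<in>UNIV. ((\<mu> - l $ j) * w $ j)\<^sup>2)"
  proof -
    have "\<epsilon>\<^sup>2 * (w $ j)\<^sup>2 \<le> ((\<mu> - l $ j) * w $ j)\<^sup>2" if "j \<noteq> i" for j
      using gap[OF that] \<open>0 < \<epsilon>\<close> by (simp add: power_mult_distrib mult_right_mono power2_mono)
    then show ?thesis
      by (intro order.trans[OF sum_mono sum_mono2]) auto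
  qed
  also have "\<dots> = (norm ((Y - X) *v u))\<^sup>2"
    using power2_norm_residual_eigenbasis[OF Q X u(2), folded w_def] ..
  finally have bound: "\<epsilon>\<^sup>2 * (1 - (w $ i)\<^sup>2) \<le> (norm ((Y - X) *v u))\<^sup>2" .
  have "0 \<le> w $ i" "w $ i \<le> 1"
    using sign w_nth component_le_norm_cart[of w i] \<open>norm w = 1\<close> by auto
  then have "2 - 2 * w $ i \<le> 2 * (1 - (w $ i)\<^sup>2)"
    by (simp add: power2_eq_square mult_left_le)
  moreover have "(norm (u - column i Q))\<^sup>2 = 2 - 2 * w $ i"
    using Q u orthogonal_matrix_orthonormal_columns[of Q]
    by (simp add: w_nth power2_norm_eq_inner inner_diff_left inner_diff_right inner_commute norm_eq_1)
  ultimately have "\<epsilon>\<^sup>2 * (norm (u - column i Q))\<^sup>2 \<le> \<epsilon>\<^sup>2 * (2 * (1 - (w $ i)\<^sup>2))"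
    by (intro mult_left_mono) simp_all
  also have "\<dots> \<le> 2 * (norm ((Y - X) *v u))\<^sup>2"
    using bound by (simp add: algebra_simps)
  finally show ?thesis
    using \<open>0 < \<epsilon>\<close> by (simp add: field_simps)
qed

lemma IVT_sign_change:
  fixes f :: "real \<Rightarrow> real"
  assumes "continuous_on {a..b} f" "a \<le> b" "f a * f b < 0"
  shows "\<exists>x\<in>{a..b}. f x = 0"
  using IVT'[of f a 0 b] IVT2'[of f b 0 a] assms
  by (cases "f a \<le> 0") (auto simp: mult_less_0_iff)

lemma eventually_charpoly_root_between:
  fixes X :: "real^'n^'n"
  assumes "a \<le> b" "det (a *\<^sub>R mat 1 - X) * det (b *\<^sub>R mat 1 - X) < 0"
  shows "\<forall>\<^sub>F Y in nhds X. \<exists>t\<in>{a..b}. det (t *\<^sub>R mat 1 - Y) = 0"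
proof -
  have "open {Y :: real^'n^'n. det (a *\<^sub>R mat 1 - Y) * det (b *\<^sub>R mat 1 - Y) < 0}"
    by (rule open_Collect_less) (intro continuous_intros)+
  from eventually_nhds_in_open[OF this, of X]
  have "\<forall>\<^sub>F Y in nhds X. det (a *\<^sub>R mat 1 - Y) * det (b *\<^sub>R mat 1 - Y) < 0"
    using assms(2) by simp
  then show ?thesis
    by eventually_elim (use assms(1) in \<open>intro IVT_sign_change continuous_intros\<close>)
qed

lemma charpoly_sign_change:
  fixes Q :: "real^'n^'n"
  assumes "orthogonal_matrix Q" and "0 < \<epsilon>" and gap: "\<And>j. j \<noteq> i \<Longrightarrow> \<epsilon> < \<bar>l $ i - l $ j\<bar>"
  defines "X \<equiv> Q ** Diag l ** transpose Q"
  shows "det ((l $ i - \<epsilon>) *\<^sub>R mat 1 - X) * det ((l $ i + \<epsilon>) *\<^sub>R mat 1 - X) < 0"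
proof -
  have "det ((l $ i - \<epsilon>) *\<^sub>R mat 1 - X) * det ((l $ i + \<epsilon>) *\<^sub>R mat 1 - X)
      = (\<Prod>j\<in>UNIV. (l $ i - l $ j)\<^sup>2 - \<epsilon>\<^sup>2)"
    using assms(1) by (simp add: X_def charpoly_orthogonal_similar_Diag flip: prod.distrib)
      (simp add: power2_eq_square algebra_simps)
  also have "\<dots> = - \<epsilon>\<^sup>2 * (\<Prod>j\<in>UNIV - {i}. (l $ i - l $ j)\<^sup>2 - \<epsilon>\<^sup>2)"
    by (simp add: prod.remove[of UNIV i])
  also have "\<dots> < 0"
  proof -
    have "\<epsilon>\<^sup>2 < (l $ i - l $ j)\<^sup>2" if "j \<noteq> i" for j
      using power_strict_mono[OF gap[OF that], of 2] \<open>0 < \<epsilon>\<close> by simp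
    then show ?thesis
      using \<open>0 < \<epsilon>\<close> by (intro mult_neg_pos prod_pos) auto
  qed
  finally show ?thesis .
qed

lemma eventually_charpoly_roots_near_spectrum:
  fixes Q :: "real^'n^'n"
  assumes "orthogonal_matrix Q" and "0 < \<epsilon>" and gap: "\<And>i j. i \<noteq> j \<Longrightarrow> \<epsilon> < \<bar>l $ i - l $ j\<bar>"
  defines "X \<equiv> Q ** Diag l ** transpose Q"
  shows "\<forall>\<^sub>F Y in nhds X. \<forall>i. \<exists>t\<in>{l $ i - \<epsilon>..l $ i + \<epsilon>}. det (t *\<^sub>R mat 1 - Y) = 0"
proof (rule eventually_all_finite)
  fix i
  have "det ((l $ i - \<epsilon>) *\<^sub>R mat 1 - X) * det ((l $ i + \<epsilon>) *\<^sub>R mat 1 - X) < 0"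
    unfolding X_def using assms(1,2) gap[of i] by (intro charpoly_sign_change) auto
  then show "\<forall>\<^sub>F Y in nhds X. \<exists>t\<in>{l $ i - \<epsilon>..l $ i + \<epsilon>}. det (t *\<^sub>R mat 1 - Y) = 0"
    using \<open>0 < \<epsilon>\<close> by (intro eventually_charpoly_root_between) auto
qed

definition rank_by :: "('a::finite \<Rightarrow> 'b::linorder) \<Rightarrow> 'a \<Rightarrow> nat" where
  "rank_by f i = card {j. f j < f i}"

lemma rank_by_strict_mono: "f i < f j \<Longrightarrow> rank_by f i < rank_by f j"
  unfolding rank_by_def by (intro psubset_card_mono) auto

lemma bij_betw_rank_by:
  fixes f :: "'a::finite \<Rightarrow> 'b::linorder"
  assumes "inj f"
  shows "bij_betw (rank_by f) UNIV {..<CARD('a)}"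
proof -
  have "inj (rank_by f)"
    by (rule injI) (metis assms injD less_irrefl linorder_neqE rank_by_strict_mono)
  moreover have "rank_by f i < CARD('a)" for i
    unfolding rank_by_def by (intro psubset_card_mono) auto
  ultimately show ?thesis
    by (simp add: bij_betw_def card_image card_subset_eq image_subsetI)
qed

lemma nonincr_permutation_exists:
  fixes l :: "real^'n::{finite,linorder}"
  assumes "inj (($) l)"
  obtains \<sigma> :: "'n \<Rightarrow> 'n" where "bij \<sigma>" "nonincr (\<chi> i. l $ \<sigma> i)"
proof
  \<comment> \<open>\<sigma> sends the k-th smallest index to the index of the k-th largest entry.\<close>
  define \<sigma> where "\<sigma> = inv (rank_by (\<lambda>k. - l $ k)) \<circ> rank_by (id :: 'n \<Rightarrow> 'n)"
  have "inj (\<lambda>k. - l $ k)"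
    using assms by (simp add: inj_def)
  then have bij_rank: "bij_betw (rank_by (\<lambda>k. - l $ k)) UNIV {..<CARD('n)}"
    by (rule bij_betw_rank_by)
  moreover have bij_pos: "bij_betw (rank_by (id :: 'n \<Rightarrow> 'n)) UNIV {..<CARD('n)}"
    by (rule bij_betw_rank_by) simp
  ultimately show "bij \<sigma>"
    unfolding \<sigma>_def by (metis bij_betw_inv_into bij_betw_trans)
  have rank_\<sigma>: "rank_by (\<lambda>k. - l $ k) (\<sigma> i) = rank_by id i" for i
  proof -
    have "rank_by id i \<in> range (rank_by (\<lambda>k. - l $ k))"
      using bij_rank bij_pos by (auto simp: bij_betw_def)
    then show ?thesis
      by (simp add: \<sigma>_def f_inv_into_f)
  qed
  show "nonincr (\<chi> i. l $ \<sigma> i)"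
    unfolding nonincr_def
  proof (intro allI impI)
    fix i j :: 'n
    assume "i \<le> j"
    then have "rank_by id i \<le> rank_by id j"
      using rank_by_strict_mono[of id i j] by (auto simp: le_less)
    then have "rank_by (\<lambda>k. - l $ k) (\<sigma> i) \<le> rank_by (\<lambda>k. - l $ k) (\<sigma> j)"
      by (simp add: rank_\<sigma>)
    then show "(\<chi> i. l $ \<sigma> i) $ j \<le> (\<chi> i. l $ \<sigma> i) $ i"
      using rank_by_strict_mono[of "\<lambda>k. - l $ k" "\<sigma> j" "\<sigma> i"] by (auto simp: not_le[symmetric])
  qed
qed

lemma order_prod_linear_factors:
  fixes f :: "'a \<Rightarrow> 'b::idom"
  assumes "finite A"
  shows "order b (\<Prod>i\<in>A. [:- f i, 1:]) = card {i\<in>A. f i = b}"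
  using assms
proof (induction A rule: finite_induct)
  case (insert x A)
  define P where "P = (\<Prod>i\<in>A. [:- f i, 1:])"
  have "P \<noteq> 0"
    using insert.hyps(1) by (simp add: P_def)
  then have "[:- f x, 1:] * P \<noteq> 0"
    by (simp only: mult_eq_0_iff) simp
  then have "order b ([:- f x, 1:] * P) = order b [:- f x, 1:] + order b P"
    by (rule order_mult)
  moreover have "order b [:- f x, 1:] = (if f x = b then 1 else 0)"
    using order_power_n_n[of b 1] by (auto intro: order_0I)
  moreover have "{i\<in>insert x A. f i = b} = (if f x = b then insert x {i\<in>A. f i = b} else {i\<in>A. f i = b})"
    by auto
  ultimately show ?case
    using insert by (simp add: P_def)
qed simp

lemma card_eq_if_prod_linear_factors_eq:
  fixes l l' :: "real^'n"
  assumes "\<And>t. (\<Prod>i\<in>UNIV. t - l $ i) = (\<Prod>i\<in>UNIV. t - l' $ i)"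
  shows "card {i. l $ i = b} = card {i. l' $ i = b}"
proof -
  have "poly (\<Prod>i\<in>UNIV. [:- (l $ i), 1:]) = poly (\<Prod>i\<in>UNIV. [:- (l' $ i), 1:])"
    using assms by (simp add: poly_prod fun_eq_iff)
  then have "(\<Prod>i\<in>UNIV. [:- (l $ i), 1:]) = (\<Prod>i\<in>UNIV. [:- (l' $ i), 1:])"
    by (simp add: poly_eq_poly_eq_iff)
  then show ?thesis
    using order_prod_linear_factors[where A=UNIV and f="\<lambda>i. l $ i"]
      order_prod_linear_factors[where A=UNIV and f="\<lambda>i. l' $ i"]
    by simp
qed

lemma card_eq_less_at_first_difference:
  fixes l l' :: "real^'n::{finite,linorder}"
  assumes "nonincr l'" "\<And>j. j < i \<Longrightarrow> l $ j = l' $ j" "l' $ i < l $ i"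
  shows "card {j. l' $ j = l $ i} < card {j. l $ j = l $ i}"
proof -
  have "{j. l' $ j = l $ i} \<subseteq> {j. j < i \<and> l $ j = l $ i}"
  proof safe
    fix j
    assume j: "l' $ j = l $ i"
    show "j < i"
    proof (rule ccontr)
      assume "\<not> j < i"
      then have "l' $ j \<le> l' $ i"
        using assms(1) by (simp add: nonincr_def)
      then show False
        using j assms(3) by simp
    qed
    then show "l $ j = l $ i"
      using j assms(2) by simp
  qed
  also have "\<dots> \<subset> {j. l $ j = l $ i}"
    by auto
  finally show ?thesis
    by (simp add: psubset_card_mono)
qed

lemma nonincr_eqI:
  fixes l l' :: "real^'n::{finite,linorder}"
  assumes "nonincr l" "nonincr l'" and card_eq: "\<And>b. card {i. l $ i = b} = card {i. l' $ i = b}"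
  shows "l = l'"
proof (rule ccontr)
  assume "l \<noteq> l'"
  define i where "i = Min {i. l $ i \<noteq> l' $ i}"
  have "{i. l $ i \<noteq> l' $ i} \<noteq> {}"
    using \<open>l \<noteq> l'\<close> by (simp add: vec_eq_iff)
  then have "l $ i \<noteq> l' $ i"
    using Min_in[of "{i. l $ i \<noteq> l' $ i}"] by (simp add: i_def)
  have before: "l $ j = l' $ j" if "j < i" for j
    using that Min_le[of "{i. l $ i \<noteq> l' $ i}" j] unfolding i_def by (meson finite leD mem_Collect_eq)
  consider "l' $ i < l $ i" | "l $ i < l' $ i"
    using \<open>l $ i \<noteq> l' $ i\<close> by linarith
  then show False
  proof cases
    case 1
    then show False
      using card_eq_less_at_first_difference[OF assms(2) before] card_eq by simp
  next
    case 2
    then show False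
      using card_eq_less_at_first_difference[OF assms(1), of i l'] before card_eq by simp
  qed
qed

lemma eigvals_eqI:
  fixes X :: "real^('n::{finite,linorder})^('n::{finite,linorder})"
  assumes "nonincr l" "\<And>t. det (t *\<^sub>R mat 1 - X) = (\<Prod>i\<in>UNIV. t - l $ i)"
  shows "eigvals X = l"
proof -
  have l: "nonincr l \<and> (\<forall>t. det (t *\<^sub>R mat 1 - X) = (\<Prod>i\<in>UNIV. t - l $ i))"
    using assms by simp
  have "l' = l" if "nonincr l' \<and> (\<forall>t. det (t *\<^sub>R mat 1 - X) = (\<Prod>i\<in>UNIV. t - l' $ i))"
    for l' :: "(real, 'n) vec"
    using that assms by (intro nonincr_eqI card_eq_if_prod_linear_factors_eq) auto
  with l show ?thesis
    unfolding eigvals_def by (intro the1_equality ex1I) blast+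
qed

lemma nonincr_eigvals:
  fixes X :: "real^('n::{finite,linorder})^('n::{finite,linorder})" and l :: "real^('n::{finite,linorder})"
  assumes "inj (($) l)" "\<And>t. det (t *\<^sub>R mat 1 - X) = (\<Prod>i\<in>UNIV. t - l $ i)"
  shows "nonincr (eigvals X)"
proof -
  obtain \<sigma> :: "'n \<Rightarrow> 'n" where "bij \<sigma>" and sorted: "nonincr (\<chi> i. l $ \<sigma> i)"
    using nonincr_permutation_exists[OF assms(1)] .
  have "det (t *\<^sub>R mat 1 - X) = (\<Prod>i\<in>UNIV. t - (\<chi> i. l $ \<sigma> i) $ i)" for t
    using assms(2) prod.reindex_bij_betw[OF \<open>bij \<sigma>\<close>, of "\<lambda>i. t - l $ i"] by simp
  then show ?thesis
    using eigvals_eqI[OF sorted] sorted by simp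
qed

lemma separating_radius_exists:
  fixes l :: "real^('n::{finite,linorder})"
  assumes dec: "\<And>i j. i < j \<Longrightarrow> l $ j < l $ i" and "0 < d"
  obtains \<epsilon> where "0 < \<epsilon>" "real CARD('n) * \<epsilon> \<le> d" "\<And>i j. i < j \<Longrightarrow> l $ j + 3 * \<epsilon> \<le> l $ i"
proof -
  have "\<forall>\<^sub>F \<epsilon> in at_right 0. i < j \<longrightarrow> l $ j + 3 * \<epsilon> \<le> l $ i" for i j
  proof (cases "i < j")
    case True
    then show ?thesis
      unfolding eventually_at_right_field using dec[OF True]
      by (intro exI[of _ "(l $ i - l $ j) / 3"]) auto
  qed simp
  then have "\<forall>\<^sub>F \<epsilon> in at_right 0. \<forall>i j. i < j \<longrightarrow> l $ j + 3 * \<epsilon> \<le> l $ i"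
    by (intro eventually_all_finite)
  moreover have "\<forall>\<^sub>F \<epsilon> in at_right 0. real CARD('n) * \<epsilon> \<le> d"
    unfolding eventually_at_right_field using \<open>0 < d\<close>
    by (intro exI[of _ "d / CARD('n)"]) (auto simp: field_simps)
  moreover note eventually_at_right_less[of 0]
  ultimately have "\<forall>\<^sub>F \<epsilon> in at_right 0. 0 < \<epsilon> \<and> real CARD('n) * \<epsilon> \<le> d \<and>
      (\<forall>i j. i < j \<longrightarrow> l $ j + 3 * \<epsilon> \<le> l $ i)"
    by eventually_elim auto
  then have "\<exists>\<epsilon>. 0 < \<epsilon> \<and> real CARD('n) * \<epsilon> \<le> d \<and> (\<forall>i j. i < j \<longrightarrow> l $ j + 3 * \<epsilon> \<le> l $ i)"
    by (rule eventually_happens'[rotated]) simp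
  then show thesis
    using that by blast
qed

lemma eigenvector_matrix_distance:
  fixes Q X Y :: "real^'n^'n" and U :: "'n \<Rightarrow> real^'n"
  assumes Q: "orthogonal_matrix Q" and X: "X = Q ** Diag l ** transpose Q"
    and U: "\<And>j. norm (U j) = 1" and eig: "\<And>j. Y *v U j = m $ j *\<^sub>R U j"
    and sign: "\<And>j. 0 \<le> column j Q \<bullet> U j"
    and "0 < \<epsilon>" and gap: "\<And>j k. k \<noteq> j \<Longrightarrow> \<epsilon> \<le> \<bar>m $ j - l $ k\<bar>"
  shows "(norm ((\<chi> i j. U j $ i) - Q))\<^sup>2 \<le> real CARD('n) * (2 * (norm (Y - X))\<^sup>2 / \<epsilon>\<^sup>2)"
proof -
  have "(norm (column j ((\<chi> i j. U j $ i) - Q)))\<^sup>2 \<le> 2 * (norm (Y - X))\<^sup>2 / \<epsilon>\<^sup>2" for j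
  proof -
    have "(norm (U j - column j Q))\<^sup>2 \<le> 2 * (norm ((Y - X) *v U j))\<^sup>2 / \<epsilon>\<^sup>2"
      using gap by (intro eigenvector_column_distance[OF Q X U eig sign \<open>0 < \<epsilon>\<close>])
    also have "\<dots> \<le> 2 * (norm (Y - X))\<^sup>2 / \<epsilon>\<^sup>2"
      using norm_matrix_vector_mult_le[of "Y - X" "U j"] U[of j]
      by (intro divide_right_mono mult_left_mono power_mono) auto
    also have "U j - column j Q = column j ((\<chi> i j. U j $ i) - Q)"
      by (simp add: column_def vec_eq_iff)
    finally show ?thesis .
  qed
  then show ?thesis
    unfolding power2_norm_matrix_columns[of "(\<chi> i j. U j $ i) - Q"] by (rule sum_bounded_above)
qed

text \<open>With windows of radius \<epsilon>, the gap 3\<epsilon> keeps the perturbed eigenvalues strictly ordered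
  and at distance at least \<epsilon> from all other unperturbed ones.\<close>

lemma perturbed_spectral_decomposition:
  fixes Q X Y :: "real^('n::{finite,linorder})^('n::{finite,linorder})" and l :: "real^('n::{finite,linorder})"
  assumes Q: "orthogonal_matrix Q" and X: "X = Q ** Diag l ** transpose Q"
    and "sym_mat Y" and "0 < \<epsilon>"
    and gap: "\<And>i j. i < j \<Longrightarrow> l $ j + 3 * \<epsilon> \<le> l $ i"
    and roots: "\<And>i. \<exists>t\<in>{l $ i - \<epsilon>..l $ i + \<epsilon>}. det (t *\<^sub>R mat 1 - Y) = 0"
  obtains P m where "orthogonal_matrix P" "Y = P ** Diag m ** transpose P" "nonincr m"
    "\<And>i. \<bar>m $ i - l $ i\<bar> \<le> \<epsilon>" "(norm (P - Q))\<^sup>2 \<le> real CARD('n) * (2 * (norm (Y - X))\<^sup>2 / \<epsilon>\<^sup>2)"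
proof -
  have "\<exists>\<mu> u. \<bar>\<mu> - l $ i\<bar> \<le> \<epsilon> \<and> norm u = 1 \<and> Y *v u = \<mu> *\<^sub>R u \<and> 0 \<le> column i Q \<bullet> u" for i
  proof -
    obtain t where t: "t \<in> {l $ i - \<epsilon>..l $ i + \<epsilon>}" "det (t *\<^sub>R mat 1 - Y) = 0"
      using roots by blast
    then obtain u where "norm u = 1" "Y *v u = t *\<^sub>R u" "0 \<le> column i Q \<bullet> u"
      using unit_eigenvector_exists by blast
    with t show ?thesis
      by (intro exI[of _ t] exI[of _ u]) (auto simp: abs_le_iff)
  qed
  then obtain \<mu> U where close: "\<And>i. \<bar>\<mu> i - l $ i\<bar> \<le> \<epsilon>" and U: "\<And>i. norm (U i) = 1"
    and sign: "\<And>i. 0 \<le> column i Q \<bullet> U i" and eig': "\<And>i. Y *v U i = \<mu> i *\<^sub>R U i"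
    by metis
  define m :: "(real, 'n) vec" where "m = (\<chi> i. \<mu> i)"
  have eig: "Y *v U i = m $ i *\<^sub>R U i" for i
    by (simp add: m_def eig')
  have m_dec: "m $ j < m $ i" if "i < j" for i j
    using gap[OF that] close[of i] close[of j] \<open>0 < \<epsilon>\<close> by (auto simp: m_def abs_le_iff)
  then have "nonincr m"
    unfolding nonincr_def by (auto simp: le_less)
  have "m $ i \<noteq> m $ j" if "i \<noteq> j" for i j
    using m_dec[of i j] m_dec[of j i] that by (cases i j rule: linorder_cases) auto
  then have "orthogonal_matrix (\<chi> i j. U j $ i)" "Y = (\<chi> i j. U j $ i) ** Diag m ** transpose (\<chi> i j. U j $ i)"
    using orthonormal_eigenvectors_diagonalize[OF \<open>sym_mat Y\<close> U eig] by simp_all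
  moreover have "\<epsilon> \<le> \<bar>m $ j - l $ k\<bar>" if "k \<noteq> j" for j k
    using gap[of j k] gap[of k j] close[of j] that
    by (cases j k rule: linorder_cases) (auto simp: m_def abs_if split: if_splits)
  then have "(norm ((\<chi> i j. U j $ i) - Q))\<^sup>2 \<le> real CARD('n) * (2 * (norm (Y - X))\<^sup>2 / \<epsilon>\<^sup>2)"
    by (rule eigenvector_matrix_distance[OF Q X U eig sign \<open>0 < \<epsilon>\<close>])
  ultimately show thesis
    using that \<open>nonincr m\<close> close by (simp add: m_def)
qed

lemma sym_mat_mem_spec_ball:
  fixes Q X Y :: "real^('n::{finite,linorder})^('n::{finite,linorder})" and l :: "real^('n::{finite,linorder})"
  assumes Q: "orthogonal_matrix Q" and X: "X = Q ** Diag l ** transpose Q"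
    and "sym_mat Y" and "0 < \<epsilon>"
    and gap: "\<And>i j. i < j \<Longrightarrow> l $ j + 3 * \<epsilon> \<le> l $ i"
    and roots: "\<And>i. \<exists>t\<in>{l $ i - \<epsilon>..l $ i + \<epsilon>}. det (t *\<^sub>R mat 1 - Y) = 0"
    and "real CARD('n) * \<epsilon> \<le> d" and "real CARD('n) * (2 * (norm (Y - X))\<^sup>2 / \<epsilon>\<^sup>2) \<le> d\<^sup>2"
  shows "Y \<in> spec_ball Q l d"
proof -
  obtain P m where P: "orthogonal_matrix P" "Y = P ** Diag m ** transpose P" "nonincr m"
    and close: "\<And>i. \<bar>m $ i - l $ i\<bar> \<le> \<epsilon>"
    and "(norm (P - Q))\<^sup>2 \<le> real CARD('n) * (2 * (norm (Y - X))\<^sup>2 / \<epsilon>\<^sup>2)"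
    using perturbed_spectral_decomposition[OF Q X \<open>sym_mat Y\<close> \<open>0 < \<epsilon>\<close> gap roots] by blast
  then have "(norm (P - Q))\<^sup>2 \<le> d\<^sup>2"
    using assms(8) by linarith
  moreover have "0 \<le> d"
    using \<open>0 < \<epsilon>\<close> \<open>real CARD('n) * \<epsilon> \<le> d\<close> by (meson order.trans mult_nonneg_nonneg of_nat_0_le_iff less_imp_le)
  ultimately have "frob_norm (P - Q) \<le> d"
    unfolding frob_norm_eq_norm by (rule power2_le_imp_le)
  have "norm (m - l) \<le> (\<Sum>i\<in>UNIV. \<bar>(m - l) $ i\<bar>)"
    by (rule norm_le_l1_cart)
  also have "\<dots> \<le> d"
    using sum_bounded_above[of UNIV "\<lambda>i. \<bar>(m - l) $ i\<bar>" \<epsilon>] close \<open>real CARD('n) * \<epsilon> \<le> d\<close> by simp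
  finally show ?thesis
    unfolding spec_ball_def using P \<open>frob_norm (P - Q) \<le> d\<close> by blast
qed

lemma sym_ball_subset_spec_ball:
  fixes Q X :: "real^('n::{finite,linorder})^('n::{finite,linorder})" and l :: "real^('n::{finite,linorder})"
  assumes Q: "orthogonal_matrix Q" and X: "X = Q ** Diag l ** transpose Q"
    and dec: "\<And>i j. i < j \<Longrightarrow> l $ j < l $ i" and "0 < d"
  shows "\<exists>d'>0. sym_ball X d' \<subseteq> spec_ball Q l d"
proof -
  obtain \<epsilon> where "0 < \<epsilon>" and "real CARD('n) * \<epsilon> \<le> d"
    and gap: "\<And>i j. i < j \<Longrightarrow> l $ j + 3 * \<epsilon> \<le> l $ i"
    using separating_radius_exists[OF dec \<open>0 < d\<close>] by blast
  have "\<epsilon> < \<bar>l $ i - l $ j\<bar>" if "i \<noteq> j" for i j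
    using gap[of i j] gap[of j i] that \<open>0 < \<epsilon>\<close> by (cases i j rule: linorder_cases) auto
  then have "\<forall>\<^sub>F Y in nhds X. \<forall>i. \<exists>t\<in>{l $ i - \<epsilon>..l $ i + \<epsilon>}. det (t *\<^sub>R mat 1 - Y) = 0"
    unfolding X using Q \<open>0 < \<epsilon>\<close> by (intro eventually_charpoly_roots_near_spectrum)
  moreover have "open {Y :: ((real, 'n) vec, 'n) vec. real CARD('n) * (2 * (norm (Y - X))\<^sup>2 / \<epsilon>\<^sup>2) < d\<^sup>2}"
    by (rule open_Collect_less; intro continuous_intros) (use \<open>0 < \<epsilon>\<close> in auto)
  from eventually_nhds_in_open[OF this, of X]
  have "\<forall>\<^sub>F Y in nhds X. real CARD('n) * (2 * (norm (Y - X))\<^sup>2 / \<epsilon>\<^sup>2) < d\<^sup>2"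
    using \<open>0 < d\<close> by simp
  ultimately have "\<forall>\<^sub>F Y in nhds X. (\<forall>i. \<exists>t\<in>{l $ i - \<epsilon>..l $ i + \<epsilon>}. det (t *\<^sub>R mat 1 - Y) = 0) \<and>
      real CARD('n) * (2 * (norm (Y - X))\<^sup>2 / \<epsilon>\<^sup>2) < d\<^sup>2"
    by (rule eventually_conj)
  then obtain \<delta> where "0 < \<delta>" and near: "\<And>Y. dist Y X \<le> \<delta> \<Longrightarrow>
      (\<forall>i. \<exists>t\<in>{l $ i - \<epsilon>..l $ i + \<epsilon>}. det (t *\<^sub>R mat 1 - Y) = 0) \<and>
      real CARD('n) * (2 * (norm (Y - X))\<^sup>2 / \<epsilon>\<^sup>2) < d\<^sup>2"
    unfolding eventually_nhds_metric_le by blast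
  have "sym_ball X \<delta> \<subseteq> spec_ball Q l d"
  proof
    fix Y
    assume "Y \<in> sym_ball X \<delta>"
    then have "sym_mat Y" "dist Y X \<le> \<delta>"
      by (simp_all add: sym_ball_def frob_norm_eq_norm dist_norm)
    with near[of Y] show "Y \<in> spec_ball Q l d"
      by (intro sym_mat_mem_spec_ball[OF Q X _ \<open>0 < \<epsilon>\<close> gap _ \<open>real CARD('n) * \<epsilon> \<le> d\<close>]) auto
  qed
  with \<open>0 < \<delta>\<close> show ?thesis
    by blast
qed

theorem lemma3:
  fixes X Qx :: "real^('n::{finite,linorder})^('n::{finite,linorder})" and \<delta>' :: real
  assumes "sym_mat X"
    and "\<forall>i j. i \<noteq> j \<longrightarrow> eigvals X $ i \<noteq> eigvals X $ j"
    and "\<delta>' > 0"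
    and "orthogonal_matrix Qx"
    and "X = Qx ** Diag (eigvals X) ** transpose Qx"
  shows "\<exists>\<delta>''>0. sym_ball X \<delta>'' \<subseteq> spec_ball Qx (eigvals X) \<delta>'"
proof -
  have charpoly: "det (t *\<^sub>R mat 1 - X) = (\<Prod>i\<in>UNIV. t - eigvals X $ i)" for t
    using charpoly_orthogonal_similar_Diag[OF assms(4), of t "eigvals X"] by (simp only: assms(5)[symmetric])
  have "nonincr (eigvals X)"
    using assms(2) charpoly by (intro nonincr_eigvals) (auto simp: inj_def)
  have "eigvals X $ j < eigvals X $ i" if "i < j" for i j
  proof -
    have "eigvals X $ j \<le> eigvals X $ i"
      using \<open>nonincr (eigvals X)\<close> that by (simp add: nonincr_def)
    moreover have "eigvals X $ i \<noteq> eigvals X $ j"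
      using assms(2) that by simp
    ultimately show ?thesis
      by simp
  qed
  then show ?thesis
    using sym_ball_subset_spec_ball[OF assms(4,5) _ assms(3)] by blast
qed

end
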